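(* Let $d\ge 3$ be an integer such that $d$ is odd or $d\equiv 0\pmod 4$. Then the hypercube $Q_d$ is $\mathbb{Z}_2^d$-distance antimagic.
   Context: $Q_d$ is the graph with vertex set $\mathbb{Z}_2^d$ (binary strings of length $d$), two vertices adjacent iff they differ in exactly one coordinate. For a graph $G$ with $n$ vertices and an Abelian group $A$ of order $n$ (written additively), and a bijection $f:V(G)\to A$, the weight of $x$ is $w_f(x)=\sum_{y\in N(x)} f(y)$ computed in $A$ ($N(x)$ the open neighbourhood). $f$ is an $A$-distance antimagic labelling if all weights are pairwise distinct; $G$ is $A$-distance antimagic if it admits such a labelling. *)

theory Defs
  imports "HOL-Algebra.FiniteProduct"
begin

definition hcube_verts :: "nat \<Rightarrow> bool list set" where
  "hcube_verts d = {xs. length xs = d}"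

definition hcube_adj :: "nat \<Rightarrow> bool list \<Rightarrow> bool list \<Rightarrow> bool" where
  "hcube_adj d x y \<longleftrightarrow> length x = d \<and> length y = d \<and> card {i. i < d \<and> x ! i \<noteq> y ! i} = 1"

definition Z2pow :: "nat \<Rightarrow> bool list monoid" where
  "Z2pow d = \<lparr> carrier = {xs. length xs = d},
               mult = (\<lambda>x y. map2 (\<lambda>a b. a \<noteq> b) x y),
               one = replicate d False \<rparr>"

definition nbhd :: "'v set \<Rightarrow> ('v \<Rightarrow> 'v \<Rightarrow> bool) \<Rightarrow> 'v \<Rightarrow> 'v set" where
  "nbhd V E x = {y \<in> V. E x y}"

definition dweight :: "('a, 'b) monoid_scheme \<Rightarrow> 'v set \<Rightarrow> ('v \<Rightarrow> 'v \<Rightarrow> bool) \<Rightarrow> ('v \<Rightarrow> 'a) \<Rightarrow> 'v \<Rightarrow> 'a" where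
  "dweight G V E f x = finprod G f (nbhd V E x)"

definition distance_antimagic_labelling ::
  "('a, 'b) monoid_scheme \<Rightarrow> 'v set \<Rightarrow> ('v \<Rightarrow> 'v \<Rightarrow> bool) \<Rightarrow> ('v \<Rightarrow> 'a) \<Rightarrow> bool" where
  "distance_antimagic_labelling G V E f \<longleftrightarrow>
     bij_betw f V (carrier G) \<and> inj_on (dweight G V E f) V"

definition distance_antimagic ::
  "('a, 'b) monoid_scheme \<Rightarrow> 'v set \<Rightarrow> ('v \<Rightarrow> 'v \<Rightarrow> bool) \<Rightarrow> bool" where
  "distance_antimagic G V E \<longleftrightarrow> (\<exists>f. distance_antimagic_labelling G V E f)"

end

theory Submission
  imports Defs
begin

(* Writing e_i for the i-th unit vector, the neighbours of x in Q_d are the vectors x + e_i,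
   so the weight of x under a labelling f is the sum of f (x + e_i) over i < d.

   Odd d: the identity labelling works, since its weight d x + (1,...,1) = x + (1,...,1) is
   the complement of x.
   d divisible by 4: Q_(a+b) is Q_a x Q_b, and for even a, b the labelling acting on the
   two halves by antimagic labellings of Q_a and Q_b is again antimagic, because each
   half-labelling contributes its own weight plus an even multiple of itself.  Starting
   from Q_0 and an explicit antimagic labelling lab4 of Q_4 we obtain all Q_(4k). *)

lemma Z2pow_comm_monoid: "comm_monoid (Z2pow d)"
  unfolding comm_monoid_def monoid_def comm_monoid_axioms_def Z2pow_def
  by (auto intro!: nth_equalityI)

lemma finprod_Z2pow:
  assumes "finite A" and "\<forall>a\<in>A. length (h a) = d"
  shows "finprod (Z2pow d) h A = map (\<lambda>j. odd (\<Sum>a\<in>A. of_bool (h a ! j) :: nat)) [0..<d]"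
  using assms
proof (induction A rule: finite_induct)
  case empty
  interpret comm_monoid "Z2pow d" by (rule Z2pow_comm_monoid)
  have "finprod (Z2pow d) h {} = \<one>\<^bsub>Z2pow d\<^esub>" by simp
  then show ?case by (auto simp: Z2pow_def intro!: nth_equalityI)
next
  case (insert a A)
  interpret comm_monoid "Z2pow d" by (rule Z2pow_comm_monoid)
  have "finprod (Z2pow d) h (insert a A) = h a \<otimes>\<^bsub>Z2pow d\<^esub> finprod (Z2pow d) h A"
    using insert by (intro finprod_insert) (auto simp: Z2pow_def)
  also have "\<dots> = map2 (\<noteq>) (h a) (map (\<lambda>j. odd (\<Sum>a\<in>A. of_bool (h a ! j) :: nat)) [0..<d])"
    using insert by (simp add: Z2pow_def)
  also have "\<dots> = map (\<lambda>j. odd (\<Sum>a\<in>insert a A. of_bool (h a ! j) :: nat)) [0..<d]"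
    using insert by (intro nth_equalityI) (simp_all del: sum_of_bool_eq)
  finally show ?case .
qed

definition flip :: "bool list \<Rightarrow> nat \<Rightarrow> bool list" where
  "flip x i = x[i := \<not> x ! i]"

lemma length_flip [simp]: "length (flip x i) = length x"
  by (simp add: flip_def)

lemma inj_on_flip: "length x = d \<Longrightarrow> inj_on (flip x) {..<d}"
  unfolding inj_on_def flip_def
  by (metis lessThan_iff nth_list_update_eq nth_list_update_neq)

definition cube_weight :: "nat \<Rightarrow> (bool list \<Rightarrow> bool list) \<Rightarrow> bool list \<Rightarrow> bool list" where
  "cube_weight d f x = map (\<lambda>j. odd (\<Sum>i<d. of_bool (f (flip x i) ! j) :: nat)) [0..<d]"

lemma length_cube_weight [simp]: "length (cube_weight d f x) = d"
  by (simp add: cube_weight_def)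

lemma nbhd_hcube:
  assumes "length x = d"
  shows "nbhd (hcube_verts d) (hcube_adj d) x = flip x ` {..<d}"
proof -
  have "hcube_adj d x y \<longleftrightarrow> y \<in> flip x ` {..<d}" if y: "length y = d" for y
  proof
    assume "hcube_adj d x y"
    then have "card {i. i < d \<and> x ! i \<noteq> y ! i} = 1"
      by (simp add: hcube_adj_def)
    then obtain i where i: "{i. i < d \<and> x ! i \<noteq> y ! i} = {i}"
      by (rule card_1_singletonE)
    have "y ! k = flip x i ! k" if "k < d" for k
      using i that assms by (cases "k = i") (auto simp: flip_def)
    then have "y = flip x i"
      using y assms by (intro nth_equalityI) auto
    with i show "y \<in> flip x ` {..<d}" by auto
  next
    assume "y \<in> flip x ` {..<d}"
    then obtain i where "i < d" and "y = flip x i" by auto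
    then have "{k. k < d \<and> x ! k \<noteq> y ! k} = {i}"
      using assms by (auto simp: flip_def nth_list_update)
    then show "hcube_adj d x y"
      using assms y by (simp add: hcube_adj_def)
  qed
  then show ?thesis
    using assms unfolding nbhd_def hcube_verts_def by auto
qed

lemma dweight_hcube:
  assumes "length x = d" and "\<And>y. length y = d \<Longrightarrow> length (f y) = d"
  shows "dweight (Z2pow d) (hcube_verts d) (hcube_adj d) f x = cube_weight d f x"
proof -
  have "dweight (Z2pow d) (hcube_verts d) (hcube_adj d) f x = finprod (Z2pow d) f (flip x ` {..<d})"
    unfolding dweight_def nbhd_hcube[OF assms(1)] ..
  also have "\<dots> = map (\<lambda>j. odd (\<Sum>y\<in>flip x ` {..<d}. of_bool (f y ! j) :: nat)) [0..<d]"
    using assms by (intro finprod_Z2pow) auto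
  also have "\<dots> = cube_weight d f x"
    by (simp add: cube_weight_def sum.reindex[OF inj_on_flip[OF assms(1)]])
  finally show ?thesis .
qed

definition cube_antimagic :: "nat \<Rightarrow> (bool list \<Rightarrow> bool list) \<Rightarrow> bool" where
  "cube_antimagic d f \<longleftrightarrow>
     f ` hcube_verts d \<subseteq> hcube_verts d \<and> inj_on f (hcube_verts d) \<and>
     inj_on (cube_weight d f) (hcube_verts d)"

lemma distance_antimagic_if_cube_antimagic:
  assumes "cube_antimagic d f"
  shows "distance_antimagic (Z2pow d) (hcube_verts d) (hcube_adj d)"
  unfolding distance_antimagic_def distance_antimagic_labelling_def
proof (intro exI conjI)
  have carrier: "carrier (Z2pow d) = hcube_verts d"
    by (simp add: Z2pow_def hcube_verts_def)
  have finite: "finite (hcube_verts d)"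
    by (simp add: hcube_verts_def finite_list_length)
  show "bij_betw f (hcube_verts d) (carrier (Z2pow d))"
    using assms endo_inj_surj[OF finite] by (auto simp: cube_antimagic_def bij_betw_def carrier)
  have "dweight (Z2pow d) (hcube_verts d) (hcube_adj d) f x = cube_weight d f x"
    if "x \<in> hcube_verts d" for x
    using that assms by (intro dweight_hcube) (auto simp: cube_antimagic_def hcube_verts_def)
  then show "inj_on (dweight (Z2pow d) (hcube_verts d) (hcube_adj d) f) (hcube_verts d)"
    using assms inj_on_cong unfolding cube_antimagic_def by blast
qed

text \<open>For odd d the weight of x under the identity labelling is its complement: coordinate j
  is flipped once (at i = j) and kept d - 1 times, an even number.\<close>
lemma cube_weight_id_odd:
  assumes "odd d" and "length x = d"
  shows "cube_weight d id x = map Not x"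
proof (rule nth_equalityI)
  show "length (cube_weight d id x) = length (map Not x)"
    using assms by simp
  fix j assume "j < length (cube_weight d id x)"
  then have j: "j < d" by simp
  have "(\<Sum>i<d. of_bool (flip x i ! j) :: nat)
      = of_bool (flip x j ! j) + (\<Sum>i\<in>{..<d} - {j}. of_bool (flip x i ! j))"
    using j by (simp add: sum.remove del: sum_of_bool_eq)
  also have "(\<Sum>i\<in>{..<d} - {j}. of_bool (flip x i ! j) :: nat) = (\<Sum>i\<in>{..<d} - {j}. of_bool (x ! j))"
    by (rule sum.cong) (auto simp: flip_def)
  also have "\<dots> = (d - 1) * of_bool (x ! j)"
    using j by simp
  finally have "(\<Sum>i<d. of_bool (flip x i ! j) :: nat) = of_bool (\<not> x ! j) + (d - 1) * of_bool (x ! j)"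
    using j assms(2) by (simp add: flip_def del: sum_of_bool_eq)
  moreover have "even (d - 1)"
    using assms(1) j by simp
  ultimately show "cube_weight d id x ! j = map Not x ! j"
    using j assms(2) by (simp add: cube_weight_def del: sum_of_bool_eq)
qed

lemma cube_antimagic_id_odd: "odd d \<Longrightarrow> cube_antimagic d id"
  unfolding cube_antimagic_def
  by (auto simp: inj_on_def hcube_verts_def cube_weight_id_odd inj_map_eq_map)

definition cube_prod :: "nat \<Rightarrow> (bool list \<Rightarrow> bool list) \<Rightarrow> (bool list \<Rightarrow> bool list) \<Rightarrow> bool list \<Rightarrow> bool list" where
  "cube_prod a f g z = f (take a z) @ g (drop a z)"

lemma cube_prod_flip_left:
  "i < length xs \<Longrightarrow> cube_prod (length xs) f g (flip (xs @ ys) i) = f (flip xs i) @ g ys"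
  by (simp add: cube_prod_def flip_def nth_append list_update_append)

lemma cube_prod_flip_right:
  "cube_prod (length xs) f g (flip (xs @ ys) (length xs + k)) = f xs @ g (flip ys k)"
  by (simp add: cube_prod_def flip_def list_update_append)

lemma sum_lessThan_add: "(\<Sum>i<a + b. h i) = (\<Sum>i<a. h i) + (\<Sum>k<b. h (a + k :: nat))"
  by (induction b) (simp_all add: add.assoc)

text \<open>The weight of a product labelling splits into the weights of its factors when both
  dimensions are even: flipping a coordinate of one half leaves the other half's label
  unchanged, so each half picks up an even multiple of its own label.\<close>
lemma cube_weight_prod:
  assumes xs: "length xs = a" and "even a" and "even b"
    and f: "\<And>x. length x = a \<Longrightarrow> length (f x) = a"
  shows "cube_weight (a + b) (cube_prod a f g) (xs @ ys) = cube_weight a f xs @ cube_weight b g ys"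
proof (rule nth_equalityI)
  show "length (cube_weight (a + b) (cube_prod a f g) (xs @ ys)) = length (cube_weight a f xs @ cube_weight b g ys)"
    by simp
  fix j assume "j < length (cube_weight (a + b) (cube_prod a f g) (xs @ ys))"
  then have j: "j < a + b" by simp
  let ?h = "\<lambda>i. of_bool (cube_prod a f g (flip (xs @ ys) i) ! j) :: nat"
  have sum: "(\<Sum>i<a + b. ?h i)
      = (\<Sum>i<a. of_bool ((f (flip xs i) @ g ys) ! j)) + (\<Sum>k<b. of_bool ((f xs @ g (flip ys k)) ! j))"
    unfolding sum_lessThan_add
    using cube_prod_flip_left[of _ xs f g ys] cube_prod_flip_right[of xs f g ys] xs
    by (simp del: sum_of_bool_eq)
  show "cube_weight (a + b) (cube_prod a f g) (xs @ ys) ! j = (cube_weight a f xs @ cube_weight b g ys) ! j"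
  proof (cases "j < a")
    case True
    have "(\<Sum>i<a + b. ?h i) = (\<Sum>i<a. of_bool (f (flip xs i) ! j)) + b * of_bool (f xs ! j)"
      unfolding sum using True xs f by (simp add: nth_append del: sum_of_bool_eq)
    then show ?thesis
      using True j \<open>even b\<close> by (simp add: cube_weight_def nth_append del: sum_of_bool_eq)
  next
    case False
    have "(\<Sum>i<a + b. ?h i) = a * of_bool (g ys ! (j - a)) + (\<Sum>k<b. of_bool (g (flip ys k) ! (j - a)))"
      unfolding sum using False xs f by (simp add: nth_append del: sum_of_bool_eq)
    moreover have "j - a < b"
      using False j by linarith
    ultimately show ?thesis
      using False j \<open>even a\<close> by (simp add: cube_weight_def nth_append del: sum_of_bool_eq)
  qed
qed

lemma inj_on_split_hcube:
  assumes "inj_on h1 (hcube_verts a)" and "inj_on h2 (hcube_verts b)"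
    and "\<And>x. x \<in> hcube_verts a \<Longrightarrow> length (h1 x) = a"
  shows "inj_on (\<lambda>z. h1 (take a z) @ h2 (drop a z)) (hcube_verts (a + b))"
proof (rule inj_onI)
  fix z z' assume z: "z \<in> hcube_verts (a + b)" and z': "z' \<in> hcube_verts (a + b)"
    and eq: "h1 (take a z) @ h2 (drop a z) = h1 (take a z') @ h2 (drop a z')"
  have halves: "take a u \<in> hcube_verts a" "drop a u \<in> hcube_verts b" if "u \<in> hcube_verts (a + b)" for u
    using that by (auto simp: hcube_verts_def)
  have "h1 (take a z) = h1 (take a z') \<and> h2 (drop a z) = h2 (drop a z')"
    using eq assms(3) halves(1)[OF z] halves(1)[OF z'] by simp
  then have "take a z = take a z' \<and> drop a z = drop a z'"
    using assms(1,2) halves[OF z] halves[OF z'] by (auto dest: inj_onD)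
  then show "z = z'"
    by (metis append_take_drop_id)
qed

lemma cube_antimagic_prod:
  assumes f: "cube_antimagic a f" and g: "cube_antimagic b g" and "even a" and "even b"
  shows "cube_antimagic (a + b) (cube_prod a f g)"
proof -
  have f_len: "\<And>x. length x = a \<Longrightarrow> length (f x) = a" and g_len: "\<And>y. length y = b \<Longrightarrow> length (g y) = b"
    using f g by (auto simp: cube_antimagic_def hcube_verts_def image_subset_iff)
  have weight: "cube_weight (a + b) (cube_prod a f g) z = cube_weight a f (take a z) @ cube_weight b g (drop a z)"
    if "z \<in> hcube_verts (a + b)" for z
    using that cube_weight_prod[OF _ \<open>even a\<close> \<open>even b\<close> f_len, of "take a z" _ g "drop a z"]
    by (simp add: hcube_verts_def)
  have "cube_prod a f g ` hcube_verts (a + b) \<subseteq> hcube_verts (a + b)"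
    using f_len g_len by (auto simp: hcube_verts_def cube_prod_def)
  moreover have "inj_on (cube_prod a f g) (hcube_verts (a + b))"
  proof -
    have "inj_on (\<lambda>z. f (take a z) @ g (drop a z)) (hcube_verts (a + b))"
      by (rule inj_on_split_hcube) (use f g f_len in \<open>auto simp: cube_antimagic_def hcube_verts_def\<close>)
    then show ?thesis
      by (simp add: cube_prod_def[abs_def])
  qed
  moreover have "inj_on (cube_weight (a + b) (cube_prod a f g)) (hcube_verts (a + b))"
  proof -
    have "inj_on (\<lambda>z. cube_weight a f (take a z) @ cube_weight b g (drop a z)) (hcube_verts (a + b))"
      by (rule inj_on_split_hcube) (use f g in \<open>auto simp: cube_antimagic_def\<close>)
    moreover have "inj_on (cube_weight (a + b) (cube_prod a f g)) (hcube_verts (a + b))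
        = inj_on (\<lambda>z. cube_weight a f (take a z) @ cube_weight b g (drop a z)) (hcube_verts (a + b))"
      by (rule inj_on_cong) (rule weight)
    ultimately show ?thesis
      by simp
  qed
  ultimately show ?thesis
    by (simp add: cube_antimagic_def)
qed

text \<open>An antimagic labelling of Q_4, found by computer search; here \<noteq> is addition in Z_2.\<close>
fun lab4 :: "bool list \<Rightarrow> bool list" where
  "lab4 [a, b, c, e] =
     [(a \<noteq> c) \<noteq> (a \<and> b), (a \<noteq> e) \<noteq> (a \<and> c), ((a \<noteq> b) \<noteq> c) \<noteq> (a \<and> e), a \<noteq> (b \<and> c \<and> e)]"
| "lab4 x = x" \<comment> \<open>irrelevant: lab4 is only used on lists of length 4\<close>

lemma hcube_verts_4: "x \<in> hcube_verts 4 \<longleftrightarrow> (\<exists>a b c e. x = [a, b, c, e])"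
  by (auto simp: hcube_verts_def length_Suc_conv numeral_eq_Suc)

text \<open>Its first three coordinates determine
  x_1, x_2, x_3 up to adding x_0; since the majority function is self-dual, the last
  coordinate (the complemented majority of x_1, x_2, x_3) then determines x_0.\<close>
lemma cube_weight_lab4:
  "cube_weight 4 lab4 [a, b, c, e] = [a \<noteq> b, a \<noteq> c, a = e, \<not> ((b \<and> c) \<or> (b \<and> e) \<or> (c \<and> e))]"
proof -
  have sum4: "(\<Sum>i<(4::nat). h i) = h 0 + h 1 + h 2 + h 3" for h :: "nat \<Rightarrow> nat"
    by (simp add: eval_nat_numeral)
  show ?thesis
    unfolding cube_weight_def flip_def
    by (cases a; cases b; cases c; cases e) (simp_all add: sum4 upt_rec del: sum_of_bool_eq)
qed

lemma inj_on_hcube_4I: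
  assumes "\<And>a b c e a' b' c' e'. h [a, b, c, e] = h [a', b', c', e'] \<Longrightarrow> [a, b, c, e] = [a', b', c', e']"
  shows "inj_on h (hcube_verts 4)"
proof (rule inj_onI)
  fix x y assume "x \<in> hcube_verts 4" "y \<in> hcube_verts 4" and eq: "h x = h y"
  then obtain a b c e a' b' c' e' where x: "x = [a, b, c, e]" and y: "y = [a', b', c', e']"
    by (auto simp: hcube_verts_4)
  show "x = y"
    unfolding x y by (rule assms) (use eq x y in simp)
qed

lemma cube_antimagic_lab4: "cube_antimagic 4 lab4"
proof -
  have "lab4 ` hcube_verts 4 \<subseteq> hcube_verts 4"
    by (auto simp: hcube_verts_4)
  moreover have "inj_on lab4 (hcube_verts 4)"
  proof (rule inj_on_hcube_4I)
    show "lab4 [a, b, c, e] = lab4 [a', b', c', e'] \<Longrightarrow> [a, b, c, e] = [a', b', c', e']"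
      for a b c e a' b' c' e'
      by (cases a; cases a'; auto)
  qed
  moreover have "inj_on (cube_weight 4 lab4) (hcube_verts 4)"
  proof (rule inj_on_hcube_4I)
    show "cube_weight 4 lab4 [a, b, c, e] = cube_weight 4 lab4 [a', b', c', e']
        \<Longrightarrow> [a, b, c, e] = [a', b', c', e']" for a b c e a' b' c' e'
      unfolding cube_weight_lab4 by (cases a; cases a'; auto)
  qed
  ultimately show ?thesis
    unfolding cube_antimagic_def by blast
qed

lemma cube_antimagic_mult_4: "\<exists>f. cube_antimagic (4 * k) f"
proof (induction k)
  case 0
  have "hcube_verts 0 = {[]}"
    by (auto simp: hcube_verts_def)
  then have "cube_antimagic 0 id"
    by (simp add: cube_antimagic_def)
  then show ?case by auto
next
  case (Suc k)
  then obtain f where "cube_antimagic (4 * k) f" ..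
  then have "cube_antimagic (4 + 4 * k) (cube_prod 4 lab4 f)"
    by (intro cube_antimagic_prod cube_antimagic_lab4) auto
  then show ?case by auto
qed

theorem mainTheorem8:
  fixes d :: nat
  assumes "d \<ge> 3" and "odd d \<or> 4 dvd d"
  shows "distance_antimagic (Z2pow d) (hcube_verts d) (hcube_adj d)"
proof -
  from assms(2) obtain f where "cube_antimagic d f"
    using cube_antimagic_id_odd cube_antimagic_mult_4 by (auto elim!: dvdE)
  then show ?thesis
    by (rule distance_antimagic_if_cube_antimagic)
qed

end
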